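(* In the triangle $ABC$ with $a=8$, $b=15$, and $c=\sqrt{(353+15\sqrt{93})/2}$, the triangle center $X_{18}$ coincides with vertex $A$.
   Context: $X_n$ denotes the $n$-th triangle center listed in Kimberling's Encyclopedia of Triangle Centers (ETC) ($X_{18}$ the second Napoleon point), given by barycentric coordinates in terms of $a=BC$, $b=CA$, $c=AB$. *)

theory Defs
  imports Complex_Main
begin

definition tri_area :: "real \<Rightarrow> real \<Rightarrow> real \<Rightarrow> real" where
  "tri_area a b c = sqrt ((a+b+c) * (-a+b+c) * (a-b+c) * (a+b-c)) / 4"

definition is_triangle :: "real \<Rightarrow> real \<Rightarrow> real \<Rightarrow> bool" where
  "is_triangle a b c \<longleftrightarrow> a > 0 \<and> b > 0 \<and> c > 0 \<and> a < b + c \<and> b < c + a \<and> c < a + b"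

(* X(18), second Napoleon point: trilinears csc(A - pi/6) : csc(B - pi/6) : csc(C - pi/6),
   i.e. barycentrics  1/g(a,b,c) : 1/g(b,c,a) : 1/g(c,a,b)  with
   g(a,b,c) = sqrt 3 * S - S_A,  S = 2*Area, S_A = (b^2+c^2-a^2)/2
   (since a csc(A - pi/6) = 4abc / (2 sqrt 3 S - 2 S_A)).
   Cleared of denominators (so that the case g = 0 is meaningful):
   g_B g_C : g_C g_A : g_A g_B. *)
definition x18_g :: "real \<Rightarrow> real \<Rightarrow> real \<Rightarrow> real" where
  "x18_g a b c = sqrt 3 * (2 * tri_area a b c) - (b\<^sup>2 + c\<^sup>2 - a\<^sup>2) / 2"

definition X18 :: "real \<Rightarrow> real \<Rightarrow> real \<Rightarrow> real \<times> real \<times> real" where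
  "X18 a b c =
     (let gA = x18_g a b c; gB = x18_g b c a; gC = x18_g c a b
      in (gB * gC, gC * gA, gA * gB))"

definition same_bary_point :: "real \<times> real \<times> real \<Rightarrow> real \<times> real \<times> real \<Rightarrow> bool" where
  "same_bary_point p q \<longleftrightarrow> p \<noteq> (0,0,0) \<and> q \<noteq> (0,0,0) \<and> (\<exists>t. t \<noteq> 0 \<and> p = (t * fst q, t * fst (snd q), t * snd (snd q)))"

end

theory Submission
  imports Defs
begin

text \<open>X18 is the vertex A exactly when g(a,b,c) = sqrt 3 S - S_A vanishes, i.e. when
  cot A = sqrt 3, i.e. A = 30 degrees. By the law of cosines this means
  b^2 + c^2 - a^2 = sqrt 3 b c, and c = sqrt ((353 + 15 sqrt 93)/2) is the larger root of
  c^2 - 15 sqrt 3 c + 161 = 0. At A = 30 degrees Heron's formula gives 4 Area = b c, and then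
  g(b,c,a) = b^2 - a^2 and g(c,a,b) = c^2 - a^2 are nonzero.\<close>

lemma tri_area_eq_sqrt:
  "tri_area a b c = sqrt ((2 * b * c)\<^sup>2 - (b\<^sup>2 + c\<^sup>2 - a\<^sup>2)\<^sup>2) / 4"
  unfolding tri_area_def by (simp add: algebra_simps power2_eq_square)

lemma tri_area_rotate: "tri_area b c a = tri_area a b c"
  unfolding tri_area_def by (simp add: algebra_simps)

lemma is_triangle_if_angle_30:
  fixes a b c :: real
  assumes "a > 0" "b > 0" "c > 0" and cos_A: "b\<^sup>2 + c\<^sup>2 - a\<^sup>2 = sqrt 3 * b * c"
  shows "is_triangle a b c"
proof -
  have "sqrt 3 < 2" by (rule real_less_lsqrt) auto
  then have "sqrt 3 * (b * c) < 2 * (b * c)" "0 < sqrt 3 * (b * c)"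
    using assms by simp_all
  then have "(b - c)\<^sup>2 < a\<^sup>2" "a\<^sup>2 < (b + c)\<^sup>2"
    using cos_A by (simp_all add: power2_diff power2_sum algebra_simps)
  then have "\<bar>b - c\<bar> < a" "a < b + c"
    using assms by (auto intro: power2_less_imp_less)
  then show ?thesis
    unfolding is_triangle_def using assms by linarith
qed

lemma x18_g_eq_0_if_angle_30:
  fixes a b c :: real
  assumes "b > 0" "c > 0" and cos_A: "b\<^sup>2 + c\<^sup>2 - a\<^sup>2 = sqrt 3 * b * c"
  shows "x18_g a b c = 0"
proof -
  have "(2 * b * c)\<^sup>2 - (b\<^sup>2 + c\<^sup>2 - a\<^sup>2)\<^sup>2 = (b * c)\<^sup>2"
    unfolding cos_A by (simp add: power_mult_distrib)
  then have "tri_area a b c = b * c / 4"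
    using assms by (simp add: tri_area_eq_sqrt)
  then show ?thesis
    unfolding x18_g_def cos_A by simp
qed

lemma x18_g_rotations_if_x18_g_eq_0:
  assumes "x18_g a b c = 0"
  shows "x18_g b c a = b\<^sup>2 - a\<^sup>2" and "x18_g c a b = c\<^sup>2 - a\<^sup>2"
  using assms unfolding x18_g_def tri_area_rotate[of a b c] tri_area_rotate[of c a b, symmetric]
  by (simp_all add: field_simps)

lemma X18_is_vertex_A:
  assumes "x18_g a b c = 0" and "a\<^sup>2 \<noteq> b\<^sup>2" and "a\<^sup>2 \<noteq> c\<^sup>2"
  shows "same_bary_point (X18 a b c) (1, 0, 0)"
proof -
  have "X18 a b c = ((b\<^sup>2 - a\<^sup>2) * (c\<^sup>2 - a\<^sup>2), 0, 0)"
    unfolding X18_def Let_def x18_g_rotations_if_x18_g_eq_0[OF assms(1)] assms(1) by simp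
  then show ?thesis
    unfolding same_bary_point_def using assms(2,3) by auto
qed

lemma angle_30_8_15:
  fixes c :: real
  assumes "c = sqrt ((353 + 15 * sqrt 93) / 2)"
  shows "15\<^sup>2 + c\<^sup>2 - 8\<^sup>2 = sqrt 3 * 15 * c"
proof -
  define r where "r = sqrt 93"
  have "r\<^sup>2 = 93" "c \<ge> 0" and c2: "c\<^sup>2 = (353 + 15 * r) / 2"
    unfolding r_def assms by simp_all
  have "(161 + c\<^sup>2)\<^sup>2 = 675 * c\<^sup>2"
    unfolding c2 using \<open>r\<^sup>2 = 93\<close> by (simp add: power2_eq_square field_simps)
  also have "\<dots> = (sqrt 3 * 15 * c)\<^sup>2"
    by (simp add: power_mult_distrib)
  finally have "161 + c\<^sup>2 = sqrt 3 * 15 * c"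
    by (rule power2_eq_imp_eq) (simp_all add: \<open>c \<ge> 0\<close>)
  then show ?thesis
    by simp
qed

theorem theorem4p2:
  fixes a b c :: real
  assumes "a = 8" and "b = 15" and "c = sqrt ((353 + 15 * sqrt 93) / 2)"
  shows "is_triangle a b c \<and> same_bary_point (X18 a b c) (1, 0, 0)"
proof -
  have cos_A: "b\<^sup>2 + c\<^sup>2 - a\<^sup>2 = sqrt 3 * b * c"
    using angle_30_8_15[OF assms(3)] assms(1,2) by simp
  have "c\<^sup>2 > 176"
    using assms(3) by (simp add: real_less_rsqrt add_pos_nonneg)
  then have "c > 0" "a\<^sup>2 \<noteq> c\<^sup>2"
    using assms(1,3) by auto
  moreover have "a\<^sup>2 \<noteq> b\<^sup>2"
    using assms(1,2) by simp
  ultimately show ?thesis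
    using is_triangle_if_angle_30 x18_g_eq_0_if_angle_30 X18_is_vertex_A cos_A assms(1,2)
    by simp
qed

end
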